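(* Let $a,\delta>0$, $n\in\mathbb{N}$, and let $J$ be an isometry-invariant kernel on $\mathbb{H}^1_L$ such that $J(L^j)\ge(a+\delta)L\log(j)L^{-2j}$ for every $j\ge n$. Then for all $k\in\mathbb{N}$ with $(a+\delta)(1-L^{-k})\ge a$ and all subsets $A\subset\Lambda_{n,n+k}$ with $|A|=\gamma L^k$, \[\mathbb{P}_J\big(A\nsim\Lambda_{n,n+2k}\setminus\Lambda_{n,n+k}\big)\le n^{-\gamma a}.\]
   Context: $\mathbb{H}^1_L$ ($L\ge2$ an integer) is the group $\bigoplus_{i=1}^\infty\mathbb{Z}/L\mathbb{Z}$ with ultrametric $\|x-y\|=L^{\max\{i:x_i\neq y_i\}}$ for $x\neq y$; $\Lambda_n(x)$ is the ball of radius $L^n$ around $x$ (an $n$-block). An isometry-invariant kernel assigns to each edge $\{x,y\}$ a weight depending only on $\|x-y\|$, written $J(L^j)$ for edges of length $L^j$. $\mathbb{P}_J$: each edge open independently with probability $1-\exp(-J(e))$. For $n\le m$, $\Lambda_{n,m}$ is the set of $n$-blocks contained in $\Lambda_m(0)$. For sets $A,B$ of $n$-blocks, $A\nsim B$ is the event that there is no open edge with one endpoint in a block of $A$ and the other in a block of $B$. *)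

theory Defs
  imports "HOL-Probability.Probability"
begin

text \<open>Points of the hierarchical group H^1_L: finitely supported sequences
  (x_1, x_2, ...) with x_i in {0..L-1}; we use functions nat => nat with the
  dummy coordinate 0 fixed to 0 (coordinates are indexed from 1).
  Group structure is irrelevant for the statement; only the ultrametric matters.\<close>
definition HL :: "nat \<Rightarrow> (nat \<Rightarrow> nat) set" where
  "HL L = {x. x 0 = 0 \<and> (\<forall>i. x i < L) \<and> finite {i. x i \<noteq> 0}}"

definition hzero :: "nat \<Rightarrow> nat" where
  "hzero = (\<lambda>_. 0)"

definition hdist :: "nat \<Rightarrow> (nat \<Rightarrow> nat) \<Rightarrow> (nat \<Rightarrow> nat) \<Rightarrow> real" where
  "hdist L x y = (if x = y then 0 else real L ^ Max {i. x i \<noteq> y i})"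

definition block :: "nat \<Rightarrow> nat \<Rightarrow> (nat \<Rightarrow> nat) \<Rightarrow> (nat \<Rightarrow> nat) set" where
  "block L n x = {y \<in> HL L. hdist L x y \<le> real L ^ n}"

text \<open>Lambda_{n,m}: the set of n-blocks contained in Lambda_m(0).\<close>
definition blocks :: "nat \<Rightarrow> nat \<Rightarrow> nat \<Rightarrow> (nat \<Rightarrow> nat) set set" where
  "blocks L n m = {b. (\<exists>x \<in> HL L. b = block L n x) \<and> b \<subseteq> block L m hzero}"

definition edges :: "nat \<Rightarrow> (nat \<Rightarrow> nat) set set" where
  "edges L = {{x, y} | x y. x \<in> HL L \<and> y \<in> HL L \<and> x \<noteq> y}"

definition edge_len :: "nat \<Rightarrow> (nat \<Rightarrow> nat) set \<Rightarrow> real" where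
  "edge_len L e = (THE d. \<forall>x\<in>e. \<forall>y\<in>e. x \<noteq> y \<longrightarrow> hdist L x y = d)"

text \<open>Percolation measure P_J for an isometry-invariant kernel J (a function of the
  edge length): each edge e is open independently with probability 1 - exp(-J(e)).\<close>
definition perc :: "nat \<Rightarrow> (real \<Rightarrow> real) \<Rightarrow> ((nat \<Rightarrow> nat) set \<Rightarrow> bool) measure" where
  "perc L J = (\<Pi>\<^sub>M e \<in> edges L. measure_pmf (bernoulli_pmf (1 - exp (- J (edge_len L e)))))"

definition not_conn ::
  "nat \<Rightarrow> (real \<Rightarrow> real) \<Rightarrow> (nat \<Rightarrow> nat) set set \<Rightarrow> (nat \<Rightarrow> nat) set set
     \<Rightarrow> ((nat \<Rightarrow> nat) set \<Rightarrow> bool) set" where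
  "not_conn L J A B = {\<omega> \<in> space (perc L J).
     \<forall>b1\<in>A. \<forall>b2\<in>B. \<forall>x\<in>b1. \<forall>y\<in>b2. x \<noteq> y \<longrightarrow> \<not> \<omega> {x, y}}"

end

theory Submission
  imports Defs
begin

(* If A and B are not connected, every edge from a point of a block of A (all of which lie in
   Lambda_m(0), m = n + k) to a point y with L^m < ||y|| <= L^(m+k) is closed; by independence this
   has probability exp (- sum of J over these edges). A point x of Lambda_m(0) is at distance exactly
   L^j from each of the L^j - L^(j-1) points of norm L^j (j > m), so the lower bound on J makes its
   contribution at least (a + delta) log n * sum_j (L - 1) L^(-j) = (a + delta) log n (L^(-m) - L^(-m-k)).
   There are |A| L^n = gamma L^m such points, so the exponent is at least
   gamma (a + delta) (1 - L^(-k)) log n >= gamma a log n. *)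

lemma hdist_sym: "hdist L x y = hdist L y x"
  unfolding hdist_def by (auto simp: eq_commute)

lemma edge_len_doubleton: "x \<noteq> y \<Longrightarrow> edge_len L {x, y} = hdist L x y"
  unfolding edge_len_def by (rule the_equality) (auto simp: hdist_sym)

lemma hdist_le_power_iff:
  assumes L: "L \<ge> 2" and x: "x \<in> HL L" and y: "y \<in> HL L"
  shows "hdist L x y \<le> real L ^ m \<longleftrightarrow> (\<forall>i>m. x i = y i)"
proof (cases "x = y")
  case True
  then show ?thesis by (simp add: hdist_def)
next
  case False
  let ?D = "{i. x i \<noteq> y i}"
  have "finite ?D"
    by (rule finite_subset[of _ "{i. x i \<noteq> 0} \<union> {i. y i \<noteq> 0}"]) (use x y in \<open>auto simp: HL_def\<close>)
  moreover have "?D \<noteq> {}" using False by auto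
  moreover have "hdist L x y \<le> real L ^ m \<longleftrightarrow> Max ?D \<le> m"
    using False L by (simp add: hdist_def power_increasing_iff)
  ultimately show ?thesis by (auto simp: not_le)
qed

lemma hdist_eq_power:
  assumes "\<forall>i>j. x i = y i" and "x j \<noteq> y j"
  shows "hdist L x y = real L ^ j"
proof -
  have "Max {i. x i \<noteq> y i} = j"
  proof (rule Max_eqI)
    show "finite {i. x i \<noteq> y i}"
      by (rule finite_subset[of _ "{..j}"]) (use assms(1) in \<open>auto simp: not_le[symmetric]\<close>)
  qed (use assms in \<open>auto simp: not_le[symmetric]\<close>)
  then show ?thesis using assms(2) by (auto simp: hdist_def)
qed

lemma block_eq:
  assumes "L \<ge> 2" and "x \<in> HL L"
  shows "block L n x = {y \<in> HL L. \<forall>i>n. y i = x i}"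
  unfolding block_def using hdist_le_power_iff[OF assms] by auto

lemma hzero_in_HL: "0 < L \<Longrightarrow> hzero \<in> HL L"
  by (simp add: HL_def hzero_def)

lemma block_hzero_eq: "L \<ge> 2 \<Longrightarrow> block L m hzero = {y \<in> HL L. \<forall>i>m. y i = 0}"
  by (simp add: block_eq hzero_in_HL) (simp add: hzero_def)

lemma block_mono: "L \<ge> 1 \<Longrightarrow> m \<le> m' \<Longrightarrow> block L m x \<subseteq> block L m' x"
  unfolding block_def by (auto elim!: order_trans intro!: power_increasing)

lemma block_subset_block:
  assumes L: "L \<ge> 2" and x: "x \<in> HL L" and "n \<le> m" and y: "y \<in> block L m x"
  shows "block L n y \<subseteq> block L m x"
proof -
  have "y \<in> HL L" using y by (simp add: block_def)
  then show ?thesis using assms by (auto simp: block_eq)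
qed

lemma bij_betw_block_PiE:
  assumes L: "L \<ge> 2" and x: "x \<in> HL L"
  shows "bij_betw (\<lambda>y. restrict y {1..n}) (block L n x) (\<Pi>\<^sub>E i\<in>{1..n}. {..<L})"
proof (rule bij_betw_byWitness[where f' = "\<lambda>h i. if i \<in> {1..n} then h i else x i"])
  have x0: "x 0 = 0" using x by (simp add: HL_def)
  show "\<forall>y\<in>block L n x. (\<lambda>i. if i \<in> {1..n} then restrict y {1..n} i else x i) = y"
    using x0 by (auto simp: block_eq[OF L x] HL_def fun_eq_iff not_le)
  show "\<forall>h\<in>\<Pi>\<^sub>E i\<in>{1..n}. {..<L}. restrict (\<lambda>i. if i \<in> {1..n} then h i else x i) {1..n} = h"
    by (auto simp: PiE_def extensional_def fun_eq_iff)
  show "(\<lambda>y. restrict y {1..n}) ` block L n x \<subseteq> (\<Pi>\<^sub>E i\<in>{1..n}. {..<L})"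
    by (auto simp: block_eq[OF L x] HL_def)
  show "(\<lambda>h i. if i \<in> {1..n} then h i else x i) ` (\<Pi>\<^sub>E i\<in>{1..n}. {..<L}) \<subseteq> block L n x"
  proof clarify
    fix h assume h: "h \<in> (\<Pi>\<^sub>E i\<in>{1..n}. {..<L})"
    let ?z = "\<lambda>i. if i \<in> {1..n} then h i else x i"
    have "finite {i. ?z i \<noteq> 0}"
      by (rule finite_subset[of _ "{1..n} \<union> {i. x i \<noteq> 0}"]) (use x in \<open>auto simp: HL_def\<close>)
    then show "?z \<in> block L n x"
      using h x x0 by (auto simp: block_eq[OF L x] HL_def PiE_def Pi_def)
  qed
qed

lemma card_block: "L \<ge> 2 \<Longrightarrow> x \<in> HL L \<Longrightarrow> card (block L n x) = L ^ n"
  using bij_betw_same_card[OF bij_betw_block_PiE] by (simp add: card_PiE)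

lemma finite_block: "L \<ge> 2 \<Longrightarrow> x \<in> HL L \<Longrightarrow> finite (block L n x)"
  using bij_betw_finite[OF bij_betw_block_PiE] by (simp add: finite_PiE)

lemma blocks_disjoint:
  assumes L: "L \<ge> 2" and "b \<in> blocks L n m" "b' \<in> blocks L n m" "b \<noteq> b'"
  shows "disjnt b b'"
proof -
  obtain x x' where x: "x \<in> HL L" "b = block L n x" and x': "x' \<in> HL L" "b' = block L n x'"
    using assms by (auto simp: blocks_def)
  show ?thesis
  proof (rule ccontr)
    assume "\<not> disjnt b b'"
    then obtain z where "z \<in> b" "z \<in> b'" by (auto simp: disjnt_def)
    then have "\<forall>i>n. x i = x' i" using x x' by (simp add: block_eq[OF L])
    then have "b = b'" using x x' by (simp add: block_eq[OF L])
    with \<open>b \<noteq> b'\<close> show False ..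
  qed
qed

lemma card_Union_blocks:
  assumes L: "L \<ge> 2" and A: "A \<subseteq> blocks L n m"
  shows "card (\<Union>A) = card A * L ^ n"
proof -
  have "card (\<Union>A) = (\<Sum>b\<in>A. card b)"
    using A by (intro card_Union_disjoint pairwiseI blocks_disjoint[OF L])
      (auto simp: blocks_def finite_block[OF L])
  also have "\<dots> = (\<Sum>b\<in>A. L ^ n)"
    using A by (intro sum.cong) (auto simp: blocks_def card_block[OF L])
  finally show ?thesis by simp
qed

lemma block_hzero_diff_subset_Union_blocks:
  assumes L: "L \<ge> 2" and "n \<le> m'"
  shows "block L m' hzero - block L m hzero \<subseteq> \<Union>(blocks L n m' - blocks L n m)"
proof
  fix y assume y: "y \<in> block L m' hzero - block L m hzero"
  then have "y \<in> HL L" by (simp add: block_def)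
  then have y_own: "y \<in> block L n y" by (simp add: block_eq[OF L])
  have "block L n y \<in> blocks L n m'"
    using block_subset_block[OF L hzero_in_HL] y \<open>y \<in> HL L\<close> assms by (auto simp: blocks_def)
  moreover have "block L n y \<notin> blocks L n m" using y y_own by (auto simp: blocks_def)
  ultimately show "y \<in> \<Union>(blocks L n m' - blocks L n m)" using y_own by blast
qed

definition shell :: "nat \<Rightarrow> nat \<Rightarrow> (nat \<Rightarrow> nat) set" where
  "shell L j = block L j hzero - block L (j - 1) hzero"

lemma shell_eq:
  assumes "L \<ge> 2" and "j \<ge> 1"
  shows "shell L j = {y \<in> HL L. (\<forall>i>j. y i = 0) \<and> y j \<noteq> 0}"
proof -
  have "j - 1 < i \<longleftrightarrow> j \<le> i" for i using assms(2) by auto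
  then show ?thesis
    unfolding shell_def block_hzero_eq[OF assms(1)] by (auto simp: le_less)
qed

lemma shell_subset_block: "L \<ge> 1 \<Longrightarrow> j \<le> m \<Longrightarrow> shell L j \<subseteq> block L m hzero"
  unfolding shell_def using block_mono by blast

lemma shell_disjoint_block:
  assumes "L \<ge> 1" and "m < j"
  shows "shell L j \<inter> block L m hzero = {}"
proof -
  have "block L m hzero \<subseteq> block L (j - 1) hzero" using assms by (intro block_mono) auto
  then show ?thesis by (auto simp: shell_def)
qed

lemma finite_shell: "L \<ge> 2 \<Longrightarrow> finite (shell L j)"
  by (simp add: shell_def finite_block hzero_in_HL)

lemma card_shell:
  assumes L: "L \<ge> 2"
  shows "real (card (shell L j)) = real L ^ j - real L ^ (j - 1)"
proof -
  have "card (shell L j) = L ^ j - L ^ (j - 1)"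
    using block_mono[of L "j - 1" j] L
    by (simp add: shell_def card_Diff_subset finite_block card_block hzero_in_HL)
  moreover have "L ^ (j - 1) \<le> L ^ j" using L by (intro power_increasing) auto
  ultimately show ?thesis by (simp add: of_nat_diff)
qed

lemma hdist_shell:
  assumes L: "L \<ge> 2" and x: "x \<in> block L m hzero" and "m < j" and y: "y \<in> shell L j"
  shows "hdist L x y = real L ^ j"
proof (rule hdist_eq_power)
  have "\<forall>i>m. x i = 0" using x by (simp add: block_hzero_eq[OF L])
  moreover have "\<forall>i>j. y i = 0" "y j \<noteq> 0" using y \<open>m < j\<close> by (simp_all add: shell_eq[OF L])
  ultimately show "\<forall>i>j. x i = y i" "x j \<noteq> y j" using \<open>m < j\<close> by auto
qed

lemma shells_disjoint:
  assumes "L \<ge> 1" and "i \<noteq> j"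
  shows "shell L i \<inter> shell L j = {}"
proof -
  have "shell L i \<inter> shell L j = {}" if "i < j" for i j
    using shell_subset_block[OF assms(1) order_refl] shell_disjoint_block[OF assms(1) that] by blast
  with assms(2) show ?thesis by (metis Int_commute linorder_neqE_nat)
qed

lemma Union_shells_subset:
  assumes "L \<ge> 1"
  shows "(\<Union>j\<in>{m<..m+k}. shell L j) \<subseteq> block L (m + k) hzero - block L m hzero"
proof (rule UN_least)
  fix j assume "j \<in> {m<..m+k}"
  then show "shell L j \<subseteq> block L (m + k) hzero - block L m hzero"
    using assms shell_subset_block[of L j "m + k"] shell_disjoint_block[of L m j] by auto
qed

lemma sum_over_shells:
  assumes L: "L \<ge> 2" and x: "x \<in> block L m hzero"
  shows "(\<Sum>y\<in>(\<Union>j\<in>{m<..m+k}. shell L j). f (hdist L x y))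
           = (\<Sum>j\<in>{m<..m+k}. real (card (shell L j)) * f (real L ^ j))"
proof -
  have "(\<Sum>y\<in>(\<Union>j\<in>{m<..m+k}. shell L j). f (hdist L x y))
          = (\<Sum>j\<in>{m<..m+k}. \<Sum>y\<in>shell L j. f (hdist L x y))"
    using L by (intro sum.UNION_disjoint) (auto simp: finite_shell shells_disjoint)
  also have "\<dots> = (\<Sum>j\<in>{m<..m+k}. \<Sum>y\<in>shell L j. f (real L ^ j))"
    using hdist_shell[OF L x] by (intro sum.cong) auto
  finally show ?thesis by simp
qed

lemma sum_inverse_powers_telescope:
  fixes x :: "'a::field"
  assumes "x \<noteq> 0"
  shows "(\<Sum>j\<in>{m<..m+k}. (x - 1) / x ^ j) = 1 / x ^ m - 1 / x ^ (m + k)"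
proof (induction k)
  case (Suc k)
  have "{m<..m + Suc k} = insert (Suc (m + k)) {m<..m + k}" by auto
  then have "(\<Sum>j\<in>{m<..m + Suc k}. (x - 1) / x ^ j) = (x - 1) / x ^ Suc (m + k) + (1 / x ^ m - 1 / x ^ (m + k))"
    using Suc.IH by simp
  also have "\<dots> = 1 / x ^ m - 1 / x ^ (m + Suc k)"
    using assms by (simp add: field_simps)
  finally show ?case .
qed simp

lemma power_diff_mult_powr:
  fixes x :: real
  assumes "x > 0" and "j \<ge> 1"
  shows "(x ^ j - x ^ (j - 1)) * (x * x powr (- 2 * real j)) = (x - 1) / x ^ j"
proof -
  have "x ^ j = x * x ^ (j - 1)" using assms(2) by (simp add: power_eq_if)
  moreover have "x powr (- 2 * real j) = 1 / (x ^ j * x ^ j)"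
    using assms(1) by (simp add: powr_minus_divide powr_realpow[symmetric] powr_add[symmetric])
  ultimately show ?thesis using assms(1) by (simp add: field_simps)
qed

lemma power_mult_inverse_powers_diff:
  fixes x :: real
  assumes "x > 0"
  shows "x ^ k * x ^ n * (1 / x ^ (n + k) - 1 / x ^ (n + k + k)) = 1 - x powr (- real k)"
  using assms by (simp add: powr_minus_divide powr_realpow power_add field_simps)

lemma sum_over_shells_ge:
  assumes L: "L \<ge> 2" and x: "x \<in> block L m hzero"
    and J: "\<And>j. m < j \<Longrightarrow> j \<le> m + k \<Longrightarrow> c * real L * real L powr (- 2 * real j) \<le> J (real L ^ j)"
  shows "c * (1 / real L ^ m - 1 / real L ^ (m + k))
           \<le> (\<Sum>y\<in>(\<Union>j\<in>{m<..m+k}. shell L j). J (hdist L x y))"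
proof -
  have "c * (1 / real L ^ m - 1 / real L ^ (m + k)) = c * (\<Sum>j\<in>{m<..m+k}. (real L - 1) / real L ^ j)"
    using L by (subst sum_inverse_powers_telescope) auto
  also have "\<dots> = (\<Sum>j\<in>{m<..m+k}. real (card (shell L j)) * (c * real L * real L powr (- 2 * real j)))"
    unfolding sum_distrib_left using L by (intro sum.cong) (auto simp: card_shell power_diff_mult_powr[symmetric])
  also have "\<dots> \<le> (\<Sum>j\<in>{m<..m+k}. real (card (shell L j)) * J (real L ^ j))"
    by (intro sum_mono mult_left_mono J) auto
  also have "\<dots> = (\<Sum>y\<in>(\<Union>j\<in>{m<..m+k}. shell L j). J (hdist L x y))"
    by (rule sum_over_shells[OF L x, symmetric])
  finally show ?thesis .
qed

definition cross_edges :: "'a set \<Rightarrow> 'a set \<Rightarrow> 'a set set" where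
  "cross_edges U V = {{x, y} | x y. x \<in> U \<and> y \<in> V}"

lemma cross_edges_subset_edges:
  "U \<subseteq> HL L \<Longrightarrow> V \<subseteq> HL L \<Longrightarrow> U \<inter> V = {} \<Longrightarrow> cross_edges U V \<subseteq> edges L"
  unfolding cross_edges_def edges_def by blast

lemma cross_edges_eq_image: "cross_edges U V = (\<lambda>(x, y). {x, y}) ` (U \<times> V)"
  by (auto simp: cross_edges_def)

lemma finite_cross_edges: "finite U \<Longrightarrow> finite V \<Longrightarrow> finite (cross_edges U V)"
  by (simp add: cross_edges_eq_image)

lemma sum_cross_edges:
  assumes "U \<inter> V = {}"
  shows "(\<Sum>e\<in>cross_edges U V. f (edge_len L e)) = (\<Sum>x\<in>U. \<Sum>y\<in>V. f (hdist L x y))"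
proof -
  have "inj_on (\<lambda>(x, y). {x, y}) (U \<times> V)"
    using assms by (auto simp: inj_on_def doubleton_eq_iff)
  then have "(\<Sum>e\<in>cross_edges U V. f (edge_len L e)) = (\<Sum>(x, y)\<in>U \<times> V. f (edge_len L {x, y}))"
    by (simp add: cross_edges_eq_image sum.reindex case_prod_beta')
  also have "\<dots> = (\<Sum>(x, y)\<in>U \<times> V. f (hdist L x y))"
  proof (intro sum.cong refl, clarify)
    fix x y assume "x \<in> U" "y \<in> V"
    with assms have "x \<noteq> y" by blast
    then show "f (edge_len L {x, y}) = f (hdist L x y)" by (simp add: edge_len_doubleton)
  qed
  finally show ?thesis by (simp add: sum.cartesian_product)
qed

lemma not_conn_subset_cross_edges_closed:
  assumes "U \<subseteq> \<Union>A" and "V \<subseteq> \<Union>B" and "U \<inter> V = {}"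
  shows "not_conn L J A B \<subseteq> {\<omega> \<in> space (perc L J). \<forall>e\<in>cross_edges U V. \<not> \<omega> e}"
proof
  fix \<omega> assume \<omega>: "\<omega> \<in> not_conn L J A B"
  have "\<not> \<omega> {x, y}" if xy: "x \<in> U" "y \<in> V" for x y
  proof -
    obtain b1 b2 where "b1 \<in> A" "x \<in> b1" "b2 \<in> B" "y \<in> b2" using xy assms(1,2) by blast
    moreover have "x \<noteq> y" using xy assms(3) by blast
    ultimately show ?thesis using \<omega> by (auto simp: not_conn_def)
  qed
  then show "\<omega> \<in> {\<omega> \<in> space (perc L J). \<forall>e\<in>cross_edges U V. \<not> \<omega> e}"
    using \<omega> by (auto simp: not_conn_def cross_edges_def)
qed

lemma edge_len_cross_edges_shells:
  assumes L: "L \<ge> 2" and U: "U \<subseteq> block L m hzero"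
    and e: "e \<in> cross_edges U (\<Union>j\<in>{m<..m+k}. shell L j)"
  obtains j where "m < j" "edge_len L e = real L ^ j"
proof -
  obtain x y j where xy: "e = {x, y}" "x \<in> U" "j \<in> {m<..m+k}" "y \<in> shell L j"
    using e unfolding cross_edges_def by blast
  then have "m < j" "x \<in> block L m hzero" using U by auto
  moreover have "x \<noteq> y" using shell_disjoint_block[of L m j] xy L \<open>m < j\<close> U by auto
  ultimately show ?thesis
    using that hdist_shell[OF L _ _ xy(4)] by (simp add: xy(1) edge_len_doubleton)
qed

lemma prob_space_perc: "prob_space (perc L J)"
  unfolding perc_def by (intro prob_space_PiM prob_space_measure_pmf)

lemma measure_perc_all_closed:
  assumes E: "finite E" "E \<subseteq> edges L" and J: "\<And>e. e \<in> E \<Longrightarrow> 0 \<le> J (edge_len L e)"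
  shows "{\<omega> \<in> space (perc L J). \<forall>e\<in>E. \<not> \<omega> e} \<in> sets (perc L J)"
    and "measure (perc L J) {\<omega> \<in> space (perc L J). \<forall>e\<in>E. \<not> \<omega> e}
           = exp (- (\<Sum>e\<in>E. J (edge_len L e)))"
proof -
  define M where "M = (\<lambda>e. measure_pmf (bernoulli_pmf (1 - exp (- J (edge_len L e)))))"
  have perc: "perc L J = PiM (edges L) M" by (simp add: perc_def M_def)
  interpret product_prob_space M "edges L"
    by (auto simp: product_prob_space_def product_sigma_finite_def product_prob_space_axioms_def
        M_def prob_space_measure_pmf prob_space_imp_sigma_finite)
  show "{\<omega> \<in> space (perc L J). \<forall>e\<in>E. \<not> \<omega> e} \<in> sets (perc L J)"
  proof (unfold perc, intro sets.sets_Collect_finite_All \<open>finite E\<close>)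
    fix e assume "e \<in> E"
    then show "{\<omega> \<in> space (PiM (edges L) M). \<not> \<omega> e} \<in> sets (PiM (edges L) M)"
      using sets_Collect_single[of e "edges L" "{False}" M] E by (auto simp: M_def)
  qed
  have "emeasure (PiM (edges L) M) {\<omega> \<in> space (PiM (edges L) M). \<forall>e\<in>E. \<omega> e \<in> {False}}
          = (\<Prod>e\<in>E. emeasure (M e) {False})"
    using E by (intro emeasure_PiM_Collect) (auto simp: M_def)
  then have "emeasure (perc L J) {\<omega> \<in> space (perc L J). \<forall>e\<in>E. \<not> \<omega> e}
               = (\<Prod>e\<in>E. emeasure (M e) {False})"
    by (simp add: perc)
  also have "\<dots> = (\<Prod>e\<in>E. ennreal (exp (- J (edge_len L e))))"
    using J by (intro prod.cong) (auto simp: M_def emeasure_pmf_single)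
  also have "\<dots> = ennreal (exp (- (\<Sum>e\<in>E. J (edge_len L e))))"
    using E by (simp add: prod_ennreal exp_sum[symmetric] sum_negf)
  finally show "measure (perc L J) {\<omega> \<in> space (perc L J). \<forall>e\<in>E. \<not> \<omega> e}
                  = exp (- (\<Sum>e\<in>E. J (edge_len L e)))"
    by (simp add: measure_def)
qed

lemma measure_not_conn_le_exp_sum:
  assumes L: "L \<ge> 2" and A: "A \<subseteq> blocks L n m" and "n \<le> m"
    and J: "\<And>j. j \<ge> 1 \<Longrightarrow> 0 \<le> J (real L ^ j)"
  shows "measure (perc L J) (not_conn L J A (blocks L n (m + k) - blocks L n m))
           \<le> exp (- (\<Sum>x\<in>\<Union>A. \<Sum>y\<in>(\<Union>j\<in>{m<..m+k}. shell L j). J (hdist L x y)))"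
proof -
  interpret prob_space "perc L J" by (rule prob_space_perc)
  define V where "V = (\<Union>j\<in>{m<..m+k}. shell L j)"
  have U: "\<Union>A \<subseteq> block L m hzero" using A by (auto simp: blocks_def)
  have V: "V \<subseteq> block L (m + k) hzero - block L m hzero"
    unfolding V_def using L by (intro Union_shells_subset) simp
  have disj: "\<Union>A \<inter> V = {}" using U V by blast
  have "finite (block L m' hzero)" "block L m' hzero \<subseteq> HL L" for m'
    using L by (simp_all add: finite_block hzero_in_HL) (auto simp: block_def)
  then have edges: "finite (cross_edges (\<Union>A) V)" "cross_edges (\<Union>A) V \<subseteq> edges L"
    using U V disj by (meson Diff_subset finite_subset finite_cross_edges cross_edges_subset_edges
        subset_trans)+
  have "0 \<le> J (edge_len L e)" if e: "e \<in> cross_edges (\<Union>A) V" for e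
  proof -
    obtain j where "m < j" "edge_len L e = real L ^ j"
      using edge_len_cross_edges_shells[OF L U e[unfolded V_def]] .
    then show ?thesis using J[of j] by simp
  qed
  note closed = measure_perc_all_closed[where J = J and L = L, OF edges this]
  have "V \<subseteq> \<Union>(blocks L n (m + k) - blocks L n m)"
    using V block_hzero_diff_subset_Union_blocks[OF L, of n "m + k" m] \<open>n \<le> m\<close> by auto
  then have "not_conn L J A (blocks L n (m + k) - blocks L n m)
               \<subseteq> {\<omega> \<in> space (perc L J). \<forall>e\<in>cross_edges (\<Union>A) V. \<not> \<omega> e}"
    using disj by (intro not_conn_subset_cross_edges_closed) auto
  then have "measure (perc L J) (not_conn L J A (blocks L n (m + k) - blocks L n m))
               \<le> exp (- (\<Sum>e\<in>cross_edges (\<Union>A) V. J (edge_len L e)))"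
    using finite_measure_mono[OF _ closed(1)] closed(2) by simp
  then show ?thesis using disj by (simp add: sum_cross_edges V_def)
qed

lemma sum_Union_blocks_shells_ge:
  assumes L: "L \<ge> 2" and A: "A \<subseteq> blocks L n m"
    and J: "\<And>j. m < j \<Longrightarrow> j \<le> m + k \<Longrightarrow> c * real L * real L powr (- 2 * real j) \<le> J (real L ^ j)"
  shows "real (card A) * real L ^ n * c * (1 / real L ^ m - 1 / real L ^ (m + k))
           \<le> (\<Sum>x\<in>\<Union>A. \<Sum>y\<in>(\<Union>j\<in>{m<..m+k}. shell L j). J (hdist L x y))"
proof -
  have "\<Union>A \<subseteq> block L m hzero" using A by (auto simp: blocks_def)
  then have "(\<Sum>x\<in>\<Union>A. c * (1 / real L ^ m - 1 / real L ^ (m + k)))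
               \<le> (\<Sum>x\<in>\<Union>A. \<Sum>y\<in>(\<Union>j\<in>{m<..m+k}. shell L j). J (hdist L x y))"
    using sum_over_shells_ge[OF L _ J] by (intro sum_mono) auto
  then show ?thesis using card_Union_blocks[OF L A] by simp
qed

theorem lemma5p5:
  fixes L n k :: nat and a \<delta> \<gamma> :: real and J :: "real \<Rightarrow> real"
    and A :: "(nat \<Rightarrow> nat) set set"
  assumes L: "L \<ge> 2"
    and a: "a > 0" and \<delta>: "\<delta> > 0"
    and n: "n \<ge> 1"
    and J_nonneg: "\<And>j. j \<ge> 1 \<Longrightarrow> J (real L ^ j) \<ge> 0"
    and J_lower: "\<And>j. j \<ge> n \<Longrightarrow>
        J (real L ^ j) \<ge> (a + \<delta>) * real L * ln (real j) * real L powr (- 2 * real j)"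
    and k: "(a + \<delta>) * (1 - real L powr (- real k)) \<ge> a"
    and A: "A \<subseteq> blocks L n (n + k)"
    and card: "real (card A) = \<gamma> * real L ^ k"
  shows "measure (perc L J) (not_conn L J A (blocks L n (n + 2 * k) - blocks L n (n + k)))
           \<le> real n powr (- \<gamma> * a)"
proof -
  define c where "c = (a + \<delta>) * ln (real n)"
  let ?S = "\<Sum>x\<in>\<Union>A. \<Sum>y\<in>(\<Union>j\<in>{n+k<..n+k+k}. shell L j). J (hdist L x y)"
  have J_ge: "c * real L * real L powr (- 2 * real j) \<le> J (real L ^ j)" if "n \<le> j" for j
  proof -
    have "ln (real n) \<le> ln (real j)" using n that by simp
    then have "(a + \<delta>) * real L * ln (real n) * real L powr (- 2 * real j)
                 \<le> (a + \<delta>) * real L * ln (real j) * real L powr (- 2 * real j)"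
      using a \<delta> by (intro mult_right_mono mult_left_mono) auto
    also have "\<dots> \<le> J (real L ^ j)" using J_lower that .
    finally show ?thesis by (simp add: c_def ac_simps)
  qed
  have "0 \<le> \<gamma> * real L ^ k" using card by (metis of_nat_0_le_iff)
  moreover have "0 < real L ^ k" using L by simp
  ultimately have "\<gamma> \<ge> 0" by (auto simp: zero_le_mult_iff)
  have "0 \<le> \<gamma> * ln (real n)" using \<open>\<gamma> \<ge> 0\<close> n by simp
  then have "\<gamma> * ln (real n) * a \<le> \<gamma> * ln (real n) * ((a + \<delta>) * (1 - real L powr (- real k)))"
    by (rule mult_left_mono[OF k])
  also have "\<dots> = real (card A) * real L ^ n * c * (1 / real L ^ (n + k) - 1 / real L ^ (n + k + k))"
    using power_mult_inverse_powers_diff[of "real L" k n] L by (simp add: card c_def)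
  also have "\<dots> \<le> ?S"
    using J_ge by (intro sum_Union_blocks_shells_ge[OF L A]) auto
  finally have "exp (- ?S) \<le> exp (- (\<gamma> * ln (real n) * a))" by simp
  also have "\<dots> = real n powr (- \<gamma> * a)" using n by (simp add: powr_def ac_simps)
  finally have exp_S: "exp (- ?S) \<le> real n powr (- \<gamma> * a)" .
  show ?thesis
    using order_trans[OF measure_not_conn_le_exp_sum[where J = J, OF L A _ J_nonneg] exp_S]
    by (simp add: mult_2 add.assoc)
qed

end
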